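(* For an $L$-layer LISTA network at initialization (all weight entries i.i.d. $\mathcal N(0,1)$), for every $l\in[L]$ and $s\in[m]$, $\|\mathbf b^l_{s,0}\|_\infty=\tilde O(1/\sqrt m)$ with probability $1-me^{-c^l_{bs}\ln^2(m)}$ for some constant $c^l_{bs}>0$.
   Context: Fix $\lambda>0$ and $\sigma(x)=\log(1+e^{x-\lambda})-\log(1+e^{-x-\lambda})$ (componentwise), $L_\sigma$-Lipschitz and $\beta_\sigma$-smooth. LISTA: input $\mathbf y\in\mathbb R^n$ with $|y_i|\le C_y$, initial $\mathbf x^0\in\mathbb R^m$ with $|x_i^0|\le C_x$, $\mathbf x^l=\sigma\big(\frac1{\sqrt n}W_1^l\mathbf y+\frac1{\sqrt m}W_2^l\mathbf x^{l-1}\big)$, $W_1^l\in\mathbb R^{m\times n}$, $W_2^l\in\mathbb R^{m\times m}$, output $\mathbf f=\frac1{\sqrt m}\mathbf x^L$, $f_s$ its $s$-th entry. $\mathbf b^l_{s,0}$ denotes $\partial f_s/\partial\mathbf x^l$ evaluated at the initial weights. $\tilde O$ is with respect to $m$, suppressing logarithmic factors. *)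

theory Defs
  imports "HOL-Probability.Probability"
begin

definition lista_sigma :: "real \<Rightarrow> real \<Rightarrow> real" where
  "lista_sigma lam x = ln (1 + exp (x - lam)) - ln (1 + exp (- x - lam))"

text \<open>Random weights are a single function omega on indices (a, l, i, j):
  a = 1 gives entry (i,j) of W_1^l, a = 2 gives entry (i,j) of W_2^l.
  Vectors are functions nat => real, meaningful on indices below the dimension.\<close>
definition W1 :: "(nat \<times> nat \<times> nat \<times> nat \<Rightarrow> real) \<Rightarrow> nat \<Rightarrow> nat \<Rightarrow> nat \<Rightarrow> real" where
  "W1 \<omega> l i j = \<omega> (1, l, i, j)"

definition W2 :: "(nat \<times> nat \<times> nat \<times> nat \<Rightarrow> real) \<Rightarrow> nat \<Rightarrow> nat \<Rightarrow> nat \<Rightarrow> real" where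
  "W2 \<omega> l i j = \<omega> (2, l, i, j)"

definition lista_layer ::
  "real \<Rightarrow> nat \<Rightarrow> nat \<Rightarrow> (nat \<Rightarrow> real) \<Rightarrow> (nat \<times> nat \<times> nat \<times> nat \<Rightarrow> real) \<Rightarrow> nat
   \<Rightarrow> (nat \<Rightarrow> real) \<Rightarrow> (nat \<Rightarrow> real)" where
  "lista_layer lam n m y \<omega> l x =
     (\<lambda>i. if i < m then
        lista_sigma lam ((\<Sum>j<n. W1 \<omega> l i j * y j) / sqrt n + (\<Sum>j<m. W2 \<omega> l i j * x j) / sqrt m)
      else 0)"

primrec lista_x ::
  "real \<Rightarrow> nat \<Rightarrow> nat \<Rightarrow> (nat \<Rightarrow> real) \<Rightarrow> (nat \<Rightarrow> real) \<Rightarrow> (nat \<times> nat \<times> nat \<times> nat \<Rightarrow> real)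
   \<Rightarrow> nat \<Rightarrow> (nat \<Rightarrow> real)" where
  "lista_x lam n m y x0 \<omega> 0 = x0"
| "lista_x lam n m y x0 \<omega> (Suc l) = lista_layer lam n m y \<omega> (Suc l) (lista_x lam n m y x0 \<omega> l)"

primrec lista_fwd ::
  "real \<Rightarrow> nat \<Rightarrow> nat \<Rightarrow> (nat \<Rightarrow> real) \<Rightarrow> (nat \<times> nat \<times> nat \<times> nat \<Rightarrow> real)
   \<Rightarrow> nat \<Rightarrow> nat \<Rightarrow> (nat \<Rightarrow> real) \<Rightarrow> (nat \<Rightarrow> real)" where
  "lista_fwd lam n m y \<omega> a 0 x = x"
| "lista_fwd lam n m y \<omega> a (Suc k) x = lista_layer lam n m y \<omega> (a + Suc k) (lista_fwd lam n m y \<omega> a k x)"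

text \<open>b^l_s (j-th entry): partial derivative of f_s = x^L_s / sqrt m with respect to the
  j-th entry of x^l, evaluated at the current x^l (weights fixed).\<close>
definition lista_b ::
  "real \<Rightarrow> nat \<Rightarrow> nat \<Rightarrow> nat \<Rightarrow> (nat \<Rightarrow> real) \<Rightarrow> (nat \<Rightarrow> real) \<Rightarrow> (nat \<times> nat \<times> nat \<times> nat \<Rightarrow> real)
   \<Rightarrow> nat \<Rightarrow> nat \<Rightarrow> nat \<Rightarrow> real" where
  "lista_b lam L n m y x0 \<omega> l s j =
     (let xl = lista_x lam n m y x0 \<omega> l in
      deriv (\<lambda>t. lista_fwd lam n m y \<omega> l (L - l) (xl(j := xl j + t)) s / sqrt m) 0)"

definition lista_b_inf ::
  "real \<Rightarrow> nat \<Rightarrow> nat \<Rightarrow> nat \<Rightarrow> (nat \<Rightarrow> real) \<Rightarrow> (nat \<Rightarrow> real) \<Rightarrow> (nat \<times> nat \<times> nat \<times> nat \<Rightarrow> real)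
   \<Rightarrow> nat \<Rightarrow> nat \<Rightarrow> real" where
  "lista_b_inf lam L n m y x0 \<omega> l s = Max ((\<lambda>j. \<bar>lista_b lam L n m y x0 \<omega> l s j\<bar>) ` {..<m})"

definition lista_idx :: "nat \<Rightarrow> nat \<Rightarrow> nat \<Rightarrow> (nat \<times> nat \<times> nat \<times> nat) set" where
  "lista_idx L n m =
     {(a, l, i, j). l \<in> {1..L} \<and> i < m \<and> ((a = 1 \<and> j < n) \<or> (a = 2 \<and> j < m))}"

definition std_normal_measure :: "real measure" where
  "std_normal_measure = density lborel (\<lambda>x. ennreal (std_normal_density x))"

definition lista_init :: "nat \<Rightarrow> nat \<Rightarrow> nat \<Rightarrow> (nat \<times> nat \<times> nat \<times> nat \<Rightarrow> real) measure" where
  "lista_init L n m = PiM (lista_idx L n m) (\<lambda>_. std_normal_measure)"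

end

theory Submission
  imports Defs
begin

text \<open>
  By the chain rule, the j-th entry of b^l_s is x^L_s / sqrt m differentiated along e_j at layer l,
  i.e. tau_(L-l) s / sqrt m for the tangent vectors tau_0 = e_j and
  tau_(k+1) = diag(sigma') W_2^(l+k+1) tau_k / sqrt m.
  Since tau_k depends only on the weights of layers up to l+k, row i of W_2^(l+k+1) is independent
  of it; conditionally on the earlier layers, its inner product with tau_k / |tau_k| is standard
  normal, and a Chernoff bound makes it exceed ln m in absolute value with probability at most
  2 exp (-(ln m)^2 / 2). Outside the union of these 2 m^2 (L-l) events |sigma'| <= 2 gives
  |tau_(k+1)| <= 2 ln m |tau_k|, so every entry of b^l_s is at most (2 ln m)^(L-l) / sqrt m,
  and for large m the union bound is at most m exp (-(ln m)^2 / 4).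
\<close>

section \<open>Gaussian linear forms with independent coefficients\<close>

abbreviation std_normal_PiM :: "'i set \<Rightarrow> ('i \<Rightarrow> real) measure" where
  "std_normal_PiM I \<equiv> PiM I (\<lambda>_. std_normal_measure)"

lemma sets_std_normal_measure [measurable_cong]: "sets std_normal_measure = sets borel"
  unfolding std_normal_measure_def by simp

lemma prob_space_std_normal_measure: "prob_space std_normal_measure"
  using prob_space_normal_density unfolding std_normal_measure_def by simp

lemma nn_integral_exp_std_normal:
  "(\<integral>\<^sup>+ z. ennreal (exp (a * z)) \<partial>std_normal_measure) = ennreal (exp (a\<^sup>2 / 2))"
proof -
  have "std_normal_density z * exp (a * z) = exp (a\<^sup>2 / 2) * normal_density a 1 z" for z
    unfolding normal_density_def by (simp add: exp_add[symmetric] power2_eq_square field_simps)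
  then have "(\<integral>\<^sup>+ z. ennreal (exp (a * z)) \<partial>std_normal_measure)
      = (\<integral>\<^sup>+ z. ennreal (exp (a\<^sup>2 / 2)) * ennreal (normal_density a 1 z) \<partial>lborel)"
    unfolding std_normal_measure_def
    by (subst nn_integral_density) (auto simp: ennreal_mult'[symmetric])
  also have "\<dots> = ennreal (exp (a\<^sup>2 / 2))"
    by (subst nn_integral_cmult) (auto simp: nn_integral_eq_integral)
  finally show ?thesis .
qed

lemma borel_measurable_std_normal_PiM_component:
  "(\<lambda>\<omega>. \<omega> i) \<in> borel_measurable (std_normal_PiM I)"
proof (cases "i \<in> I")
  case True
  then have "(\<lambda>\<omega>. \<omega> i) \<in> std_normal_PiM I \<rightarrow>\<^sub>M std_normal_measure"
    by (rule measurable_component_singleton)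
  then show ?thesis
    by (simp only: measurable_cong_sets[OF refl sets_std_normal_measure])
next
  case False
  have "\<omega> i = undefined" if "\<omega> \<in> space (std_normal_PiM I)" for \<omega>
    using PiE_arb[OF _ False] that by (simp add: space_PiM)
  then show ?thesis
    by (rule measurable_cong[THEN iffD2, OF _ measurable_const]) simp_all
qed

lemma nn_integral_std_normal_PiM_exp_sum:
  assumes "finite R"
  shows "(\<integral>\<^sup>+ y. ennreal (exp (\<Sum>r\<in>R. c r * y r)) \<partial>std_normal_PiM R)
    = ennreal (exp ((\<Sum>r\<in>R. (c r)\<^sup>2) / 2))"
proof -
  interpret product_sigma_finite "\<lambda>_. std_normal_measure"
    using prob_space_std_normal_measure
    by (simp add: product_sigma_finite_def prob_space_imp_sigma_finite)
  have [measurable]: "(\<lambda>z. exp (a * z)) \<in> borel_measurable std_normal_measure" for a :: real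
    by measurable
  have "(\<integral>\<^sup>+ y. ennreal (exp (\<Sum>r\<in>R. c r * y r)) \<partial>std_normal_PiM R)
      = (\<integral>\<^sup>+ y. (\<Prod>r\<in>R. ennreal (exp (c r * y r))) \<partial>std_normal_PiM R)"
    using assms by (subst prod_ennreal) (auto simp: exp_sum)
  also have "\<dots> = (\<Prod>r\<in>R. ennreal (exp ((c r)\<^sup>2 / 2)))"
    using assms by (subst product_nn_integral_prod) (auto simp: nn_integral_exp_std_normal)
  also have "\<dots> = ennreal (exp ((\<Sum>r\<in>R. (c r)\<^sup>2) / 2))"
    using assms by (simp add: prod_ennreal exp_sum sum_divide_distrib)
  finally show ?thesis .
qed

locale indep_unit_coefficients =
  fixes I R :: "'i set" and u :: "('i \<Rightarrow> real) \<Rightarrow> 'i \<Rightarrow> real"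
  assumes finite_I: "finite I" and R_subset: "R \<subseteq> I"
    and measurable_coefficient: "\<And>r. (\<lambda>\<omega>. u \<omega> r) \<in> borel_measurable (std_normal_PiM I)"
    and indep: "\<And>\<omega> \<omega>' r. (\<And>\<iota>. \<iota> \<notin> R \<Longrightarrow> \<omega> \<iota> = \<omega>' \<iota>) \<Longrightarrow> r \<in> R \<Longrightarrow> u \<omega> r = u \<omega>' r"
    and unit: "\<And>\<omega>. (\<Sum>r\<in>R. (u \<omega> r)\<^sup>2) \<le> 1"
begin

lemmas [measurable] = measurable_coefficient borel_measurable_std_normal_PiM_component[where I = I]

lemma nn_integral_exp_linear_form_le:
  "(\<integral>\<^sup>+ \<omega>. ennreal (exp (t * (\<Sum>r\<in>R. \<omega> r * u \<omega> r))) \<partial>std_normal_PiM I) \<le> ennreal (exp (t\<^sup>2 / 2))"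
proof -
  interpret product_sigma_finite "\<lambda>_. std_normal_measure"
    using prob_space_std_normal_measure
    by (simp add: product_sigma_finite_def prob_space_imp_sigma_finite)
  define J where "J = I - R"
  have I: "I = J \<union> R" "J \<inter> R = {}" "finite J" "finite R"
    using finite_I R_subset finite_subset unfolding J_def by auto
  have integrand: "(\<lambda>\<omega>. ennreal (exp (t * (\<Sum>r\<in>R. \<omega> r * u \<omega> r)))) \<in> borel_measurable (std_normal_PiM I)"
    by measurable
  have inner: "(\<integral>\<^sup>+ y. ennreal (exp (t * (\<Sum>r\<in>R. merge J R (x, y) r * u (merge J R (x, y)) r)))
      \<partial>std_normal_PiM R) \<le> ennreal (exp (t\<^sup>2 / 2))" for x
  proof -
    define c where "c = u (merge J R (x, \<lambda>_. 0))"
    have "u (merge J R (x, y)) r = c r" if "r \<in> R" for y r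
      unfolding c_def using that by (intro indep) (auto simp: merge_def)
    then have "(\<integral>\<^sup>+ y. ennreal (exp (t * (\<Sum>r\<in>R. merge J R (x, y) r * u (merge J R (x, y)) r)))
        \<partial>std_normal_PiM R) = (\<integral>\<^sup>+ y. ennreal (exp (\<Sum>r\<in>R. (t * c r) * y r)) \<partial>std_normal_PiM R)"
      using I(2) by (simp add: sum_distrib_left mult_ac)
    also have "\<dots> = ennreal (exp (t\<^sup>2 * (\<Sum>r\<in>R. (c r)\<^sup>2) / 2))"
      using I(4) by (simp add: nn_integral_std_normal_PiM_exp_sum power_mult_distrib sum_distrib_left)
    also have "\<dots> \<le> ennreal (exp (t\<^sup>2 / 2))"
      using mult_left_mono[OF unit[of "merge J R (x, \<lambda>_. 0)"], of "t\<^sup>2"] by (simp add: c_def)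
    finally show ?thesis .
  qed
  have "(\<integral>\<^sup>+ \<omega>. ennreal (exp (t * (\<Sum>r\<in>R. \<omega> r * u \<omega> r))) \<partial>std_normal_PiM I)
      = (\<integral>\<^sup>+ x. (\<integral>\<^sup>+ y. ennreal (exp (t * (\<Sum>r\<in>R. merge J R (x, y) r * u (merge J R (x, y)) r)))
          \<partial>std_normal_PiM R) \<partial>std_normal_PiM J)"
    unfolding I(1) using I integrand
    by (intro product_nn_integral_fold) (simp_all flip: I(1))
  also have "\<dots> \<le> (\<integral>\<^sup>+ x. ennreal (exp (t\<^sup>2 / 2)) \<partial>std_normal_PiM J)"
    by (intro nn_integral_mono inner)
  also have "\<dots> = ennreal (exp (t\<^sup>2 / 2))"
  proof -
    interpret prob_space "std_normal_PiM J"
      by (intro prob_space_PiM prob_space_std_normal_measure)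
    show ?thesis
      by (simp add: emeasure_space_1)
  qed
  finally show ?thesis .
qed

lemma tail_le:
  assumes "T > 0"
  shows "measure (std_normal_PiM I) {\<omega> \<in> space (std_normal_PiM I). T \<le> (\<Sum>r\<in>R. \<omega> r * u \<omega> r)}
    \<le> exp (- T\<^sup>2 / 2)"
proof -
  let ?P = "std_normal_PiM I"
  interpret prob_space ?P
    by (intro prob_space_PiM prob_space_std_normal_measure)
  have "emeasure ?P {\<omega> \<in> space ?P. T \<le> (\<Sum>r\<in>R. \<omega> r * u \<omega> r)}
      \<le> ennreal (exp (- T * T)) *
        (\<integral>\<^sup>+ \<omega>. ennreal (exp (T * (\<Sum>r\<in>R. \<omega> r * u \<omega> r))) * indicator (space ?P) \<omega> \<partial>?P)"
    using \<open>T > 0\<close> by (intro Chernoff_ineq_nn_integral_ge) measurable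
  also have "\<dots> = ennreal (exp (- T * T)) * (\<integral>\<^sup>+ \<omega>. ennreal (exp (T * (\<Sum>r\<in>R. \<omega> r * u \<omega> r))) \<partial>?P)"
    by (simp cong: nn_integral_cong)
  also have "\<dots> \<le> ennreal (exp (- T * T)) * ennreal (exp (T\<^sup>2 / 2))"
    by (intro mult_left_mono nn_integral_exp_linear_form_le) auto
  also have "\<dots> = ennreal (exp (- T\<^sup>2 / 2))"
    by (simp add: ennreal_mult[symmetric] exp_add[symmetric] power2_eq_square)
  finally show ?thesis
    by (simp add: emeasure_eq_measure)
qed

lemma abs_tail_le:
  assumes "T > 0"
  shows "measure (std_normal_PiM I) {\<omega> \<in> space (std_normal_PiM I). T \<le> \<bar>\<Sum>r\<in>R. \<omega> r * u \<omega> r\<bar>}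
    \<le> 2 * exp (- T\<^sup>2 / 2)"
proof -
  let ?P = "std_normal_PiM I"
  let ?tail = "\<lambda>u. {\<omega> \<in> space ?P. T \<le> (\<Sum>r\<in>R. \<omega> r * u \<omega> r)}"
  interpret neg: indep_unit_coefficients I R "\<lambda>\<omega> r. - u \<omega> r"
  proof unfold_locales
    show "- u \<omega> r = - u \<omega>' r" if "\<And>\<iota>. \<iota> \<notin> R \<Longrightarrow> \<omega> \<iota> = \<omega>' \<iota>" and "r \<in> R" for \<omega> \<omega>' r
      using indep[OF that] by (rule arg_cong)
  qed (use finite_I R_subset unit measurable_coefficient in simp_all)
  have "{\<omega> \<in> space ?P. T \<le> \<bar>\<Sum>r\<in>R. \<omega> r * u \<omega> r\<bar>} = ?tail u \<union> ?tail (\<lambda>\<omega> r. - u \<omega> r)"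
    by (auto simp: sum_negf)
  then have "measure ?P {\<omega> \<in> space ?P. T \<le> \<bar>\<Sum>r\<in>R. \<omega> r * u \<omega> r\<bar>}
      \<le> measure ?P (?tail u) + measure ?P (?tail (\<lambda>\<omega> r. - u \<omega> r))"
    by (simp only:) (intro measure_Un_le; measurable)
  with tail_le[OF assms] neg.tail_le[OF assms] show ?thesis
    by linarith
qed

end

lemma L2_set_le_sqrt_card_mult:
  assumes "\<And>i. i \<in> A \<Longrightarrow> \<bar>f i\<bar> \<le> c"
  shows "L2_set f A \<le> sqrt (card A) * c"
proof (cases "A = {}")
  case False
  then have "c \<ge> 0"
    using assms by force
  have "L2_set f A = L2_set (\<lambda>i. \<bar>f i\<bar>) A"
    by (simp add: L2_set_def)
  also have "\<dots> \<le> L2_set (\<lambda>_. c) A"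
    using assms by (intro L2_set_mono) auto
  finally show ?thesis
    using \<open>c \<ge> 0\<close> by (simp add: L2_set_constant)
qed simp

lemma sum_mult_eq_L2_set_mult_normalized:
  assumes "finite A"
  shows "(\<Sum>i\<in>A. w i * v i) = L2_set v A * (\<Sum>i\<in>A. w i * (v i / L2_set v A))"
proof (cases "L2_set v A = 0")
  case True
  then show ?thesis
    using assms by (simp add: L2_set_eq_0_iff)
qed (simp add: sum_distrib_left)

lemma sum_power2_normalized_le_1:
  "(\<Sum>i\<in>A. (v i / L2_set v A)\<^sup>2) \<le> 1"
proof -
  have "(\<Sum>i\<in>A. (v i / L2_set v A)\<^sup>2) = (\<Sum>i\<in>A. (v i)\<^sup>2) / (L2_set v A)\<^sup>2"
    by (simp add: power_divide sum_divide_distrib)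
  also have "\<dots> = (\<Sum>i\<in>A. (v i)\<^sup>2) / (\<Sum>i\<in>A. (v i)\<^sup>2)"
    by (simp add: L2_set_def sum_nonneg)
  finally show ?thesis
    by simp
qed

section \<open>The backward vector as a forward-mode derivative\<close>

type_synonym weights = "nat \<times> nat \<times> nat \<times> nat \<Rightarrow> real"

definition lista_dsigma :: "real \<Rightarrow> real \<Rightarrow> real" where
  "lista_dsigma lam z = exp (z - lam) / (1 + exp (z - lam)) + exp (- z - lam) / (1 + exp (- z - lam))"

lemma lista_sigma_has_real_derivative:
  "(lista_sigma lam has_real_derivative lista_dsigma lam z) (at z)"
  unfolding lista_sigma_def lista_dsigma_def
  by (auto intro!: derivative_eq_intros simp: add_pos_pos)

lemma abs_lista_dsigma_le: "\<bar>lista_dsigma lam z\<bar> \<le> 2"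
proof -
  have "\<bar>exp a / (1 + exp a)\<bar> \<le> 1" for a :: real
    by (simp add: abs_of_pos add_pos_pos)
  from this[of "z - lam"] this[of "- z - lam"] show ?thesis
    unfolding lista_dsigma_def by linarith
qed

definition lista_preact :: "nat \<Rightarrow> nat \<Rightarrow> (nat \<Rightarrow> real) \<Rightarrow> weights \<Rightarrow> nat \<Rightarrow> (nat \<Rightarrow> real) \<Rightarrow> nat \<Rightarrow> real" where
  "lista_preact n m y \<omega> l x i = (\<Sum>j<n. W1 \<omega> l i j * y j) / sqrt n + (\<Sum>j<m. W2 \<omega> l i j * x j) / sqrt m"

lemma lista_layer_eq_preact:
  "lista_layer lam n m y \<omega> l x i = (if i < m then lista_sigma lam (lista_preact n m y \<omega> l x i) else 0)"
  unfolding lista_layer_def lista_preact_def by simp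

lemma lista_x_eq_fwd: "lista_x lam n m y x0 \<omega> l = lista_fwd lam n m y \<omega> 0 l x0"
  by (induction l) simp_all

primrec lista_tangent ::
  "real \<Rightarrow> nat \<Rightarrow> nat \<Rightarrow> (nat \<Rightarrow> real) \<Rightarrow> weights \<Rightarrow> nat \<Rightarrow> (nat \<Rightarrow> real) \<Rightarrow> nat \<Rightarrow> nat \<Rightarrow> nat \<Rightarrow> real"
where
  "lista_tangent lam n m y \<omega> a x j 0 = (\<lambda>i. if i = j then 1 else 0)"
| "lista_tangent lam n m y \<omega> a x j (Suc k) = (\<lambda>i. if i < m then
     lista_dsigma lam (lista_preact n m y \<omega> (a + Suc k) (lista_fwd lam n m y \<omega> a k x) i) *
     ((\<Sum>j'<m. W2 \<omega> (a + Suc k) i j' * lista_tangent lam n m y \<omega> a x j k j') / sqrt m)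
   else 0)"

lemma lista_fwd_has_real_derivative:
  "((\<lambda>t. lista_fwd lam n m y \<omega> a k (x(j := x j + t)) i) has_real_derivative
    lista_tangent lam n m y \<omega> a x j k i) (at 0)"
proof (induction k arbitrary: i)
  case 0
  show ?case
    by (auto intro!: derivative_eq_intros)
next
  case (Suc k)
  have "((\<lambda>t. \<Sum>j'<m. W2 \<omega> (a + Suc k) i j' * lista_fwd lam n m y \<omega> a k (x(j := x j + t)) j')
      has_real_derivative (\<Sum>j'<m. W2 \<omega> (a + Suc k) i j' * lista_tangent lam n m y \<omega> a x j k j')) (at 0)"
    by (intro DERIV_sum DERIV_cmult Suc.IH)
  then have "((\<lambda>t. lista_preact n m y \<omega> (a + Suc k) (lista_fwd lam n m y \<omega> a k (x(j := x j + t))) i)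
      has_real_derivative (\<Sum>j'<m. W2 \<omega> (a + Suc k) i j' * lista_tangent lam n m y \<omega> a x j k j') / sqrt m)
      (at 0)"
    unfolding lista_preact_def using DERIV_add[OF DERIV_const DERIV_cdivide] by simp
  from DERIV_chain2[OF lista_sigma_has_real_derivative this] show ?case
    by (simp add: lista_layer_eq_preact del: fun_upd_apply)
qed

lemma lista_b_eq_tangent:
  "lista_b lam L n m y x0 \<omega> l s j =
    lista_tangent lam n m y \<omega> l (lista_x lam n m y x0 \<omega> l) j (L - l) s / sqrt m"
  unfolding lista_b_def Let_def
  by (intro DERIV_imp_deriv DERIV_cdivide lista_fwd_has_real_derivative)

section \<open>Dependence on the weights and measurability\<close>

definition weights_agree_upto :: "nat \<Rightarrow> weights \<Rightarrow> weights \<Rightarrow> bool" where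
  "weights_agree_upto A \<omega> \<omega>' \<longleftrightarrow> (\<forall>b l i j. l \<le> A \<longrightarrow> \<omega> (b, l, i, j) = \<omega>' (b, l, i, j))"

lemma lista_preact_cong_weights:
  "weights_agree_upto A \<omega> \<omega>' \<Longrightarrow> l \<le> A \<Longrightarrow> lista_preact n m y \<omega> l = lista_preact n m y \<omega>' l"
  unfolding lista_preact_def W1_def W2_def weights_agree_upto_def by simp

lemma lista_fwd_cong_weights:
  assumes "weights_agree_upto A \<omega> \<omega>'" and "a + k \<le> A"
  shows "lista_fwd lam n m y \<omega> a k = lista_fwd lam n m y \<omega>' a k"
  using assms(2)
proof (induction k)
  case (Suc k)
  have "lista_preact n m y \<omega> (a + Suc k) = lista_preact n m y \<omega>' (a + Suc k)"
    using lista_preact_cong_weights[OF assms(1)] Suc.prems by simp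
  with Suc.IH Suc.prems show ?case
    by (intro ext) (simp add: lista_layer_eq_preact)
qed (simp add: fun_eq_iff)

lemma lista_tangent_cong_weights:
  assumes "weights_agree_upto A \<omega> \<omega>'" and "a + k \<le> A"
  shows "lista_tangent lam n m y \<omega> a x j k = lista_tangent lam n m y \<omega>' a x j k"
  using assms(2)
proof (induction k)
  case (Suc k)
  have "W2 \<omega> (a + Suc k) = W2 \<omega>' (a + Suc k)"
    using assms(1) Suc.prems unfolding weights_agree_upto_def W2_def by (simp add: fun_eq_iff)
  moreover have "lista_preact n m y \<omega> (a + Suc k) = lista_preact n m y \<omega>' (a + Suc k)"
    using lista_preact_cong_weights[OF assms(1)] Suc.prems by simp
  moreover have "lista_fwd lam n m y \<omega> a k = lista_fwd lam n m y \<omega>' a k"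
    using lista_fwd_cong_weights[OF assms(1)] Suc.prems by simp
  ultimately show ?case
    using Suc.IH Suc.prems by (intro ext) simp
qed simp

lemma borel_measurable_lista_preact:
  assumes "\<And>i. (\<lambda>\<omega>. X \<omega> i) \<in> borel_measurable (std_normal_PiM I)"
  shows "(\<lambda>\<omega>. lista_preact n m y \<omega> l (X \<omega>) i) \<in> borel_measurable (std_normal_PiM I)"
  unfolding lista_preact_def W1_def W2_def
  using borel_measurable_std_normal_PiM_component[where I = I, measurable] assms[measurable]
  by measurable

lemma borel_measurable_lista_fwd:
  assumes "\<And>i. (\<lambda>\<omega>. X \<omega> i) \<in> borel_measurable (std_normal_PiM I)"
  shows "(\<lambda>\<omega>. lista_fwd lam n m y \<omega> a k (X \<omega>) i) \<in> borel_measurable (std_normal_PiM I)"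
proof (induction k arbitrary: i)
  case (Suc k)
  have "lista_sigma lam \<in> borel_measurable borel"
    unfolding lista_sigma_def by measurable
  from measurable_compose[OF borel_measurable_lista_preact[OF Suc.IH] this] show ?case
    by (simp add: lista_layer_eq_preact)
qed (simp add: assms)

lemma borel_measurable_lista_tangent:
  assumes "\<And>i. (\<lambda>\<omega>. X \<omega> i) \<in> borel_measurable (std_normal_PiM I)"
  shows "(\<lambda>\<omega>. lista_tangent lam n m y \<omega> a (X \<omega>) j k i) \<in> borel_measurable (std_normal_PiM I)"
proof (induction k arbitrary: i)
  case (Suc k)
  have "lista_dsigma lam \<in> borel_measurable borel"
    unfolding lista_dsigma_def by measurable
  note dsigma = measurable_compose[OF borel_measurable_lista_preact[OF borel_measurable_lista_fwd[OF assms]] this]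
  note borel_measurable_std_normal_PiM_component[where I = I, measurable] Suc.IH[measurable] dsigma[measurable]
  show ?case
    unfolding lista_tangent.simps W2_def by measurable
qed simp

lemma borel_measurable_lista_x:
  "(\<lambda>\<omega>. lista_x lam n m y x0 \<omega> l i) \<in> borel_measurable (std_normal_PiM I)"
  unfolding lista_x_eq_fwd by (rule borel_measurable_lista_fwd) simp

lemma borel_measurable_lista_b_inf:
  "(\<lambda>\<omega>. lista_b_inf lam L n m y x0 \<omega> l s) \<in> borel_measurable (std_normal_PiM I)"
  unfolding lista_b_inf_def lista_b_eq_tangent
  by (intro borel_measurable_Max finite_lessThan borel_measurable_abs borel_measurable_divide
      borel_measurable_const borel_measurable_lista_tangent borel_measurable_lista_x)

section \<open>Deterministic bound on the backward vector\<close>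

lemma L2_set_lista_tangent_le:
  assumes "T \<ge> 0" and "j < m"
    and rows: "\<And>k i. k < K \<Longrightarrow> i < m \<Longrightarrow>
      \<bar>\<Sum>j'<m. W2 \<omega> (a + Suc k) i j' * lista_tangent lam n m y \<omega> a x j k j'\<bar>
        \<le> T * L2_set (lista_tangent lam n m y \<omega> a x j k) {..<m}"
  shows "L2_set (lista_tangent lam n m y \<omega> a x j K) {..<m} \<le> (2 * T) ^ K"
proof -
  let ?\<tau> = "lista_tangent lam n m y \<omega> a x j"
  have "L2_set (?\<tau> k) {..<m} \<le> (2 * T) ^ k" if "k \<le> K" for k
    using that
  proof (induction k)
    case 0
    show ?case
      using \<open>j < m\<close> by (simp add: L2_set_def if_distrib[of power2] cong: if_cong)
  next
    case (Suc k)
    have m: "sqrt m > 0"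
      using \<open>j < m\<close> by simp
    have entry: "\<bar>?\<tau> (Suc k) i\<bar> \<le> 2 * T * L2_set (?\<tau> k) {..<m} / sqrt m" if "i \<in> {..<m}" for i
    proof -
      have "\<bar>?\<tau> (Suc k) i\<bar>
          = \<bar>lista_dsigma lam (lista_preact n m y \<omega> (a + Suc k) (lista_fwd lam n m y \<omega> a k x) i)\<bar>
            * \<bar>\<Sum>j'<m. W2 \<omega> (a + Suc k) i j' * ?\<tau> k j'\<bar> / sqrt m"
        using that by (simp add: abs_mult)
      also have "\<dots> \<le> 2 * (T * L2_set (?\<tau> k) {..<m}) / sqrt m"
        using Suc.prems that \<open>T \<ge> 0\<close> m
        by (intro divide_right_mono mult_mono abs_lista_dsigma_le rows) auto
      finally show ?thesis
        by simp
    qed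
    have "L2_set (?\<tau> (Suc k)) {..<m} \<le> sqrt (card {..<m}) * (2 * T * L2_set (?\<tau> k) {..<m} / sqrt m)"
      by (rule L2_set_le_sqrt_card_mult) (rule entry)
    also have "\<dots> = 2 * T * L2_set (?\<tau> k) {..<m}"
      using m by simp
    also have "\<dots> \<le> 2 * T * (2 * T) ^ k"
      using Suc \<open>T \<ge> 0\<close> by (intro mult_left_mono) auto
    finally show ?case
      by simp
  qed
  then show ?thesis
    by simp
qed

definition lista_row_proj ::
  "real \<Rightarrow> nat \<Rightarrow> nat \<Rightarrow> (nat \<Rightarrow> real) \<Rightarrow> (nat \<Rightarrow> real) \<Rightarrow> weights \<Rightarrow> nat \<Rightarrow> nat \<Rightarrow> nat \<Rightarrow> nat \<Rightarrow> real"
where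
  "lista_row_proj lam n m y x0 \<omega> l j k i =
     (let \<tau> = lista_tangent lam n m y \<omega> l (lista_x lam n m y x0 \<omega> l) j k
      in \<Sum>j'<m. W2 \<omega> (l + Suc k) i j' * (\<tau> j' / L2_set \<tau> {..<m}))"

lemma lista_b_inf_le_if_row_proj_le:
  assumes "T \<ge> 0" and "s < m"
    and rows: "\<And>j k i. j < m \<Longrightarrow> k < L - l \<Longrightarrow> i < m \<Longrightarrow> \<bar>lista_row_proj lam n m y x0 \<omega> l j k i\<bar> \<le> T"
  shows "lista_b_inf lam L n m y x0 \<omega> l s \<le> (2 * T) ^ (L - l) / sqrt m"
  unfolding lista_b_inf_def
proof (intro Max.boundedI)
  fix b assume "b \<in> (\<lambda>j. \<bar>lista_b lam L n m y x0 \<omega> l s j\<bar>) ` {..<m}"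
  then obtain j where "j < m" and b: "b = \<bar>lista_b lam L n m y x0 \<omega> l s j\<bar>"
    by auto
  let ?\<tau> = "lista_tangent lam n m y \<omega> l (lista_x lam n m y x0 \<omega> l) j"
  have "\<bar>\<Sum>j'<m. W2 \<omega> (l + Suc k) i j' * ?\<tau> k j'\<bar> \<le> T * L2_set (?\<tau> k) {..<m}"
    if "k < L - l" "i < m" for k i
  proof -
    have "(\<Sum>j'<m. W2 \<omega> (l + Suc k) i j' * ?\<tau> k j')
        = L2_set (?\<tau> k) {..<m} * lista_row_proj lam n m y x0 \<omega> l j k i"
      unfolding lista_row_proj_def Let_def by (rule sum_mult_eq_L2_set_mult_normalized) simp
    then show ?thesis
      using mult_left_mono[OF rows[OF \<open>j < m\<close> that] L2_set_nonneg[of "?\<tau> k" "{..<m}"]]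
      by (simp add: abs_mult mult_ac)
  qed
  then have norm: "L2_set (?\<tau> (L - l)) {..<m} \<le> (2 * T) ^ (L - l)"
    using \<open>T \<ge> 0\<close> \<open>j < m\<close> by (intro L2_set_lista_tangent_le) auto
  have "\<bar>?\<tau> (L - l) s\<bar> \<le> L2_set (?\<tau> (L - l)) {..<m}"
    using member_le_L2_set[of "{..<m}" s "\<lambda>i. \<bar>?\<tau> (L - l) i\<bar>"] \<open>s < m\<close> by (simp add: L2_set_def)
  with norm show "b \<le> (2 * T) ^ (L - l) / sqrt m"
    unfolding b lista_b_eq_tangent by (simp add: abs_div divide_right_mono)
qed (use \<open>s < m\<close> in auto)

section \<open>Probability bound\<close>

lemma finite_lista_idx: "finite (lista_idx L n m)"
  by (rule finite_subset[of _ "{1, 2} \<times> {1..L} \<times> {..<m} \<times> {..<n + m}"]) (auto simp: lista_idx_def)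

lemma borel_measurable_lista_row_proj:
  "(\<lambda>\<omega>. lista_row_proj lam n m y x0 \<omega> l j k i) \<in> borel_measurable (std_normal_PiM I)"
  unfolding lista_row_proj_def Let_def L2_set_def W2_def
  using borel_measurable_std_normal_PiM_component[where I = I, measurable]
    borel_measurable_lista_tangent[OF borel_measurable_lista_x, measurable]
  by measurable

lemma measure_lista_row_proj_tail:
  assumes "l + k < L" and "i < m" and "T > 0"
  shows "measure (lista_init L n m)
      {\<omega> \<in> space (lista_init L n m). T \<le> \<bar>lista_row_proj lam n m y x0 \<omega> l j k i\<bar>}
    \<le> 2 * exp (- T\<^sup>2 / 2)"
proof -
  define \<rho> where "\<rho> j' = (2::nat, l + Suc k, i, j')" for j' :: nat
  define \<tau> where "\<tau> \<omega> = lista_tangent lam n m y \<omega> l (lista_x lam n m y x0 \<omega> l) j k" for \<omega>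
  define u where "u \<omega> r = \<tau> \<omega> (snd (snd (snd r))) / L2_set (\<tau> \<omega>) {..<m}" for \<omega> and r :: "nat \<times> nat \<times> nat \<times> nat"
  have inj: "inj_on \<rho> {..<m}"
    by (simp add: inj_on_def \<rho>_def)
  have proj: "lista_row_proj lam n m y x0 \<omega> l j k i = (\<Sum>r\<in>\<rho> ` {..<m}. \<omega> r * u \<omega> r)" for \<omega>
    unfolding sum.reindex[OF inj] by (simp add: lista_row_proj_def Let_def u_def \<tau>_def \<rho>_def W2_def)
  have "measure (std_normal_PiM (lista_idx L n m))
      {\<omega> \<in> space (std_normal_PiM (lista_idx L n m)). T \<le> \<bar>\<Sum>r\<in>\<rho> ` {..<m}. \<omega> r * u \<omega> r\<bar>}
    \<le> 2 * exp (- T\<^sup>2 / 2)"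
  proof (rule indep_unit_coefficients.abs_tail_le[OF _ \<open>T > 0\<close>], unfold_locales)
    show "finite (lista_idx L n m)"
      by (rule finite_lista_idx)
    show "\<rho> ` {..<m} \<subseteq> lista_idx L n m"
      using assms by (auto simp: \<rho>_def lista_idx_def)
    show "(\<lambda>\<omega>. u \<omega> r) \<in> borel_measurable (std_normal_PiM (lista_idx L n m))" for r
      unfolding u_def \<tau>_def L2_set_def
      using borel_measurable_lista_tangent[OF borel_measurable_lista_x, measurable] by measurable
    show "u \<omega> r = u \<omega>' r"
      if agree: "\<And>\<iota>. \<iota> \<notin> \<rho> ` {..<m} \<Longrightarrow> \<omega> \<iota> = \<omega>' \<iota>" for \<omega> \<omega>' r
    proof -
      have "weights_agree_upto (l + k) \<omega> \<omega>'"
        unfolding weights_agree_upto_def by (auto intro!: agree simp: \<rho>_def)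
      then have "\<tau> \<omega> = \<tau> \<omega>'"
        unfolding \<tau>_def lista_x_eq_fwd
        by (simp add: lista_fwd_cong_weights[of "l + k" \<omega> \<omega>' 0 l] lista_tangent_cong_weights[of "l + k" \<omega> \<omega>' l k])
      then show ?thesis
        by (simp add: u_def)
    qed
    show "(\<Sum>r\<in>\<rho> ` {..<m}. (u \<omega> r)\<^sup>2) \<le> 1" for \<omega>
      using sum_power2_normalized_le_1[of "\<tau> \<omega>" "{..<m}"]
      unfolding sum.reindex[OF inj] by (simp add: u_def \<rho>_def)
  qed
  then show ?thesis
    unfolding lista_init_def proj .
qed

lemma measure_lista_b_inf_le_ge:
  assumes "s < m" and "T > 0"
  shows "1 - 2 * real (m * (L - l) * m) * exp (- T\<^sup>2 / 2) \<le> measure (lista_init L n m)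
      {\<omega> \<in> space (lista_init L n m). lista_b_inf lam L n m y x0 \<omega> l s \<le> (2 * T) ^ (L - l) / sqrt m}"
proof -
  let ?P = "lista_init L n m"
  let ?good = "{\<omega> \<in> space ?P. lista_b_inf lam L n m y x0 \<omega> l s \<le> (2 * T) ^ (L - l) / sqrt m}"
  interpret prob_space ?P
    unfolding lista_init_def by (intro prob_space_PiM prob_space_std_normal_measure)
  define Ix where "Ix = {..<m} \<times> {..<L - l} \<times> {..<m}"
  define Bad where "Bad = (\<lambda>(j, k, i). {\<omega> \<in> space ?P. T \<le> \<bar>lista_row_proj lam n m y x0 \<omega> l j k i\<bar>})"
  have Bad_sets: "Bad x \<in> sets ?P" for x
    unfolding Bad_def lista_init_def
    using borel_measurable_lista_row_proj[measurable] by (cases x) simp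
  have "measure ?P (\<Union>x\<in>Ix. Bad x) \<le> (\<Sum>x\<in>Ix. measure ?P (Bad x))"
    by (rule measure_UNION_le) (auto simp: Ix_def Bad_sets)
  also have "\<dots> \<le> (\<Sum>x\<in>Ix. 2 * exp (- T\<^sup>2 / 2))"
  proof (intro sum_mono)
    fix x assume "x \<in> Ix"
    then obtain j k i where x: "x = (j, k, i)" and "l + k < L" and "i < m"
      by (auto simp: Ix_def)
    from measure_lista_row_proj_tail[OF this(2,3) \<open>T > 0\<close>]
    show "measure ?P (Bad x) \<le> 2 * exp (- T\<^sup>2 / 2)"
      unfolding Bad_def x by simp
  qed
  also have "\<dots> = 2 * real (m * (L - l) * m) * exp (- T\<^sup>2 / 2)"
    by (simp add: Ix_def card_cartesian_product)
  finally have bad: "measure ?P (\<Union>x\<in>Ix. Bad x) \<le> 2 * real (m * (L - l) * m) * exp (- T\<^sup>2 / 2)" .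
  have "space ?P - (\<Union>x\<in>Ix. Bad x) \<subseteq> ?good"
  proof safe
    fix \<omega> assume "\<omega> \<in> space ?P" and "\<omega> \<notin> (\<Union>x\<in>Ix. Bad x)"
    then have "\<bar>lista_row_proj lam n m y x0 \<omega> l j k i\<bar> \<le> T"
      if "j < m" "k < L - l" "i < m" for j k i
      using that by (force simp: Ix_def Bad_def)
    then show "lista_b_inf lam L n m y x0 \<omega> l s \<le> (2 * T) ^ (L - l) / sqrt m"
      using \<open>T > 0\<close> \<open>s < m\<close> by (intro lista_b_inf_le_if_row_proj_le) auto
  qed
  moreover have "?good \<in> sets ?P"
    unfolding lista_init_def using borel_measurable_lista_b_inf[measurable] by simp
  ultimately have "measure ?P (space ?P - (\<Union>x\<in>Ix. Bad x)) \<le> measure ?P ?good"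
    by (intro finite_measure_mono)
  moreover have "measure ?P (space ?P - (\<Union>x\<in>Ix. Bad x)) = 1 - measure ?P (\<Union>x\<in>Ix. Bad x)"
    using Bad_sets by (intro prob_compl) (auto simp: Ix_def)
  ultimately show ?thesis
    using bad by linarith
qed

lemma mult_exp_neg_half_ln_power2_le:
  fixes m K L :: nat
  assumes "K \<le> L" and "L \<ge> 1" and "m > 0" and big: "ln m \<ge> 4 * ln (2 * real L) + 8"
  shows "2 * real (m * K * m) * exp (- (ln m)\<^sup>2 / 2) \<le> real m * exp (- (1/4) * (ln m)\<^sup>2)"
proof -
  let ?T = "ln (real m)"
  have "ln (2 * real L) \<ge> 0"
    using \<open>L \<ge> 1\<close> by simp
  with big have "8 * ?T \<le> ?T * ?T"
    by (intro mult_right_mono) auto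
  with big \<open>ln (2 * real L) \<ge> 0\<close> have "ln (2 * real L) + ?T \<le> ?T\<^sup>2 / 4"
    unfolding power2_eq_square by linarith
  then have "exp (ln (2 * real L) + ?T) \<le> exp (?T\<^sup>2 / 4)"
    by simp
  then have "2 * real L * real m \<le> exp (?T\<^sup>2 / 4)"
    using \<open>L \<ge> 1\<close> \<open>m > 0\<close> by (simp add: exp_add)
  have "2 * real (m * K * m) \<le> real m * (2 * real L * real m)"
    using \<open>K \<le> L\<close> by (simp add: mult_ac mult_right_mono)
  also have "\<dots> \<le> real m * exp (?T\<^sup>2 / 4)"
    using \<open>2 * real L * real m \<le> _\<close> by (intro mult_left_mono) auto
  finally have "2 * real (m * K * m) * exp (- ?T\<^sup>2 / 2) \<le> real m * exp (?T\<^sup>2 / 4) * exp (- ?T\<^sup>2 / 2)"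
    by (intro mult_right_mono) auto
  also have "\<dots> = real m * exp (- (1/4) * ?T\<^sup>2)"
    by (simp add: mult.assoc exp_add[symmetric])
  finally show ?thesis .
qed

lemma measure_lista_b_inf_le_ln_power_ge:
  assumes "L \<ge> 1" and "exp (4 * ln (2 * real L) + 8) \<le> real m" and "s < m"
  shows "1 - real m * exp (- (1/4) * (ln m)\<^sup>2) \<le> measure (lista_init L n m)
    {\<omega> \<in> space (lista_init L n m).
      lista_b_inf lam L n m y x0 \<omega> l s \<le> 2 ^ (L - l) * ln m powr real (L - l) / sqrt m}"
proof -
  have big: "ln m \<ge> 4 * ln (2 * real L) + 8"
    using ln_mono[OF assms(2)] by simp
  moreover have "ln (2 * real L) \<ge> 0"
    using \<open>L \<ge> 1\<close> by simp
  ultimately have "ln m > 0"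
    by linarith
  then have power_eq: "2 ^ (L - l) * ln m powr real (L - l) = (2 * ln m) ^ (L - l)"
    by (simp add: powr_realpow power_mult_distrib)
  have "1 - 2 * real (m * (L - l) * m) * exp (- (ln m)\<^sup>2 / 2) \<le> measure (lista_init L n m)
      {\<omega> \<in> space (lista_init L n m).
        lista_b_inf lam L n m y x0 \<omega> l s \<le> 2 ^ (L - l) * ln m powr real (L - l) / sqrt m}"
    unfolding power_eq by (rule measure_lista_b_inf_le_ge[OF \<open>s < m\<close> \<open>ln m > 0\<close>])
  moreover have "2 * real (m * (L - l) * m) * exp (- (ln m)\<^sup>2 / 2) \<le> real m * exp (- (1/4) * (ln m)\<^sup>2)"
    using \<open>L \<ge> 1\<close> \<open>s < m\<close> big by (intro mult_exp_neg_half_ln_power2_le) auto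
  ultimately show ?thesis
    by linarith
qed

theorem lemma7:
  fixes lam Cx Cy :: real and L n :: nat
  assumes "lam > 0" and "L \<ge> 1" and "n \<ge> 1"
  shows "\<forall>l \<in> {1..L}. \<exists>c > 0. \<exists>C k :: real. \<exists>M :: nat. \<forall>m \<ge> M.
    \<forall>y x0 :: nat \<Rightarrow> real. (\<forall>i < n. \<bar>y i\<bar> \<le> Cy) \<longrightarrow> (\<forall>i < m. \<bar>x0 i\<bar> \<le> Cx) \<longrightarrow>
    (\<forall>s < m.
      measure (lista_init L n m)
        {\<omega> \<in> space (lista_init L n m).
           lista_b_inf lam L n m y x0 \<omega> l s \<le> C * ln (real m) powr k / sqrt (real m)}
      \<ge> 1 - real m * exp (- c * (ln (real m))\<^sup>2))"
proof -
  define M :: nat where "M = nat \<lceil>exp (4 * ln (2 * real L) + 8)\<rceil>"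
  have "1 - real m * exp (- (1/4) * (ln m)\<^sup>2) \<le> measure (lista_init L n m)
    {\<omega> \<in> space (lista_init L n m).
      lista_b_inf lam L n m y x0 \<omega> l s \<le> 2 ^ (L - l) * ln m powr real (L - l) / sqrt m}"
    if "M \<le> m" and "s < m" for l m y x0 s
    using \<open>L \<ge> 1\<close> that by (intro measure_lista_b_inf_le_ln_power_ge) (auto simp: M_def nat_le_iff ceiling_le_iff)
  moreover have "(1/4 :: real) > 0"
    by simp
  ultimately show ?thesis
    by blast
qed

end
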